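(* Let $T$ be a tree with $|V(T)|$ even, and suppose the $3$-coloring game is being played on $T$ (starting from the uncolored tree, Alice moving first). If at some point of the game the current partial coloring contains an uncolored path $P_4$ that is surrounded by a color $\alpha$, i.e. each vertex of the $P_4$ has a neighbor colored $\alpha$ and no neighbor colored with a color other than $\alpha$, then Bob can win the $3$-coloring game on $T$.
   Context: The $3$-coloring game on a graph: Alice and Bob alternate turns, Alice first, each coloring an uncolored vertex with one of $3$ colors not used on any of its neighbors; Bob wins if at some point an uncolored vertex has no such color available; Alice wins if all vertices become colored. *)

theory Defs
  imports Main
begin

definition simple_graph :: "'a set \<Rightarrow> 'a set set \<Rightarrow> bool" where
  "simple_graph V E \<longleftrightarrow> finite V \<and> (\<forall>e\<in>E. \<exists>u v. e = {u, v} \<and> u \<noteq> v \<and> u \<in> V \<and> v \<in> V)"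

definition adj :: "'a set set \<Rightarrow> 'a \<Rightarrow> 'a \<Rightarrow> bool" where
  "adj E u v \<longleftrightarrow> {u, v} \<in> E \<and> u \<noteq> v"

definition is_walk :: "'a set set \<Rightarrow> 'a list \<Rightarrow> bool" where
  "is_walk E xs \<longleftrightarrow> xs \<noteq> [] \<and> (\<forall>i. Suc i < length xs \<longrightarrow> adj E (xs ! i) (xs ! Suc i))"

definition connected_graph :: "'a set \<Rightarrow> 'a set set \<Rightarrow> bool" where
  "connected_graph V E \<longleftrightarrow> V \<noteq> {} \<and>
     (\<forall>u\<in>V. \<forall>v\<in>V. \<exists>xs. is_walk E xs \<and> hd xs = u \<and> last xs = v)"

definition is_cycle :: "'a set set \<Rightarrow> 'a list \<Rightarrow> bool" where
  "is_cycle E xs \<longleftrightarrow> length xs \<ge> 3 \<and> distinct xs \<and> is_walk E xs \<and> adj E (last xs) (hd xs)"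

definition is_tree :: "'a set \<Rightarrow> 'a set set \<Rightarrow> bool" where
  "is_tree V E \<longleftrightarrow> simple_graph V E \<and> connected_graph V E \<and> (\<nexists>xs. is_cycle E xs)"

(* Partial colorings: c v = Some j means v has color j (colors are 0..<k), None = uncolored. *)
definition available :: "nat \<Rightarrow> 'a set set \<Rightarrow> ('a \<Rightarrow> nat option) \<Rightarrow> 'a \<Rightarrow> nat set" where
  "available k E c v = {j. j < k \<and> \<not> (\<exists>u. adj E u v \<and> c u = Some j)}"

(* Bob has won: some uncolored vertex has no available color *)
definition blocked :: "nat \<Rightarrow> 'a set \<Rightarrow> 'a set set \<Rightarrow> ('a \<Rightarrow> nat option) \<Rightarrow> bool" where
  "blocked k V E c \<longleftrightarrow> (\<exists>v\<in>V. c v = None \<and> available k E c v = {})"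

definition legal_move :: "nat \<Rightarrow> 'a set \<Rightarrow> 'a set set \<Rightarrow> ('a \<Rightarrow> nat option) \<Rightarrow> 'a \<Rightarrow> nat \<Rightarrow> bool" where
  "legal_move k V E c v j \<longleftrightarrow> v \<in> V \<and> c v = None \<and> j \<in> available k E c v"

(* Alice moves first, so it is Alice's turn iff an even number of vertices is colored *)
definition alice_turn :: "'a set \<Rightarrow> ('a \<Rightarrow> nat option) \<Rightarrow> bool" where
  "alice_turn V c \<longleftrightarrow> even (card {v\<in>V. c v \<noteq> None})"

(* Positions arising in an actual play of the game from the uncolored graph
   (the game stops as soon as Bob has won). *)
inductive reachable :: "nat \<Rightarrow> 'a set \<Rightarrow> 'a set set \<Rightarrow> ('a \<Rightarrow> nat option) \<Rightarrow> bool"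
  for k V E where
  start: "reachable k V E (\<lambda>_. None)"
| step: "reachable k V E c \<Longrightarrow> \<not> blocked k V E c \<Longrightarrow> legal_move k V E c v j
          \<Longrightarrow> reachable k V E (c(v := Some j))"

inductive bob_wins :: "nat \<Rightarrow> 'a set \<Rightarrow> 'a set set \<Rightarrow> ('a \<Rightarrow> nat option) \<Rightarrow> bool"
  for k V E where
  won: "blocked k V E c \<Longrightarrow> bob_wins k V E c"
| bob_move: "\<not> alice_turn V c \<Longrightarrow> legal_move k V E c v j \<Longrightarrow> bob_wins k V E (c(v := Some j))
          \<Longrightarrow> bob_wins k V E c"
| alice_move: "alice_turn V c \<Longrightarrow> (\<exists>v\<in>V. c v = None) \<Longrightarrow>
          (\<forall>v j. legal_move k V E c v j \<longrightarrow> bob_wins k V E (c(v := Some j)))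
          \<Longrightarrow> bob_wins k V E c"

definition surrounded_P4 :: "'a set \<Rightarrow> 'a set set \<Rightarrow> ('a \<Rightarrow> nat option) \<Rightarrow> nat \<Rightarrow> 'a list \<Rightarrow> bool" where
  "surrounded_P4 V E c al P \<longleftrightarrow> length P = 4 \<and> distinct P \<and> set P \<subseteq> V \<and> is_walk E P \<and>
     (\<forall>x\<in>set P. c x = None \<and> (\<exists>y. adj E x y \<and> c y = Some al) \<and>
        (\<forall>y. adj E x y \<and> c y \<noteq> None \<longrightarrow> c y = Some al))"

end

theory Submission
  imports Defs
begin

text \<open>Bob keeps the \<open>P\<^sub>4\<close> uncoloured and surrounded by \<open>\<alpha>\<close> for as long as he can. A path vertex
  then sees only \<open>\<alpha>\<close>, so as soon as one of its neighbours receives a colour \<open>\<beta> \<noteq> \<alpha>\<close>, Bob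
  gives an uncoloured path neighbour of it the third colour and it is blocked; since \<open>T\<close> is a tree,
  a vertex off the path has at most one neighbour on it, so that path neighbour is still free. Hence
  Alice can never break the invariant. When Bob cannot keep it, the parity of \<open>|V|\<close> leaves an
  uncoloured vertex \<open>x\<close> off the path; \<open>x\<close> is adjacent to the path and \<open>\<alpha>\<close> is not available at
  it, and Bob colours a path vertex so as to create two blocking threats that no single reply of
  Alice parries.\<close>

lemma adj_sym: "adj E u v \<longleftrightarrow> adj E v u"
  unfolding adj_def by (auto simp: insert_commute)

lemma adj_irrefl [simp]: "\<not> adj E v v"
  unfolding adj_def by simp

lemma all_nat_unfold: "(\<forall>i. Q i) \<longleftrightarrow> Q 0 \<and> (\<forall>i. Q (Suc i))" for Q :: "nat \<Rightarrow> bool"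
  by (metis not0_implies_Suc)

lemma is_walk_Cons_Cons [simp]: "is_walk E (x # y # xs) \<longleftrightarrow> adj E x y \<and> is_walk E (y # xs)"
  unfolding is_walk_def by (subst all_nat_unfold) simp

lemma is_walk_singleton [simp]: "is_walk E [x]"
  by (simp add: is_walk_def)

lemma tree_no_common_neighbour_of_path_ends:
  assumes "is_tree V E" "is_walk E ys" "distinct ys" "length ys \<ge> 2" "v \<notin> set ys"
    and "adj E v (hd ys)" "adj E v (last ys)"
  shows False
proof -
  have "is_cycle E (v # ys)"
    using assms(2-7) by (cases ys) (auto simp: is_cycle_def adj_sym)
  then show False
    using assms(1) unfolding is_tree_def by blast
qed

lemma ex_other_colour:
  assumes "a < 3" "c < 3" "a \<noteq> c"
  shows "\<exists>b. b \<noteq> c \<and> {..<3::nat} - {a} = {b, c}"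
  using assms by (intro exI[of _ "3 - a - c"]) (auto; arith)

lemma available_update:
  assumes "f v = None"
  shows "available k E (f(v := Some j)) u =
    (if adj E v u then available k E f u - {j} else available k E f u)"
proof -
  have "(\<exists>w. adj E w u \<and> (f(v := Some j)) w = Some i) \<longleftrightarrow>
      (adj E v u \<and> i = j) \<or> (\<exists>w. adj E w u \<and> f w = Some i)" for i
    using assms by (metis fun_upd_apply option.distinct(1) option.inject)
  then show ?thesis
    unfolding available_def by auto
qed

lemma alice_turn_update:
  assumes "finite V" "v \<in> V" "f v = None"
  shows "alice_turn V (f(v := Some j)) \<longleftrightarrow> \<not> alice_turn V f"
proof -
  have "{w\<in>V. (f(v := Some j)) w \<noteq> None} = insert v {w\<in>V. f w \<noteq> None}"
    and "v \<notin> {w\<in>V. f w \<noteq> None}"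
    using assms by auto
  then show ?thesis
    using assms(1) unfolding alice_turn_def by simp
qed

definition block_threat ::
  "nat \<Rightarrow> 'a set \<Rightarrow> 'a set set \<Rightarrow> ('a \<Rightarrow> nat option) \<Rightarrow> 'a \<Rightarrow> 'a \<Rightarrow> nat \<Rightarrow> bool" where
  "block_threat k V E f p q c \<longleftrightarrow>
     p \<in> V \<and> f p = None \<and> adj E q p \<and> legal_move k V E f q c \<and> available k E f p \<subseteq> {c}"

lemma bob_wins_by_threat:
  assumes "\<not> alice_turn V f" "block_threat k V E f p q c"
  shows "bob_wins k V E f"
proof -
  from assms(2) have p: "p \<in> V" "f p = None" "adj E q p" "available k E f p \<subseteq> {c}"
    and move: "legal_move k V E f q c"
    unfolding block_threat_def by auto
  then have "f q = None" and "p \<noteq> q"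
    unfolding legal_move_def by auto
  with p have "available k E (f(q := Some c)) p = {}"
    using available_update[of f q k E c p] by auto
  with p \<open>p \<noteq> q\<close> have "blocked k V E (f(q := Some c))"
    unfolding blocked_def by auto
  then show ?thesis
    using bob_wins.bob_move[OF assms(1) move] bob_wins.won by blast
qed

lemma block_threat_update:
  assumes "block_threat k V E f p q c" "f v = None" "v \<notin> {p, q}" "\<not> (adj E v q \<and> j = c)"
  shows "block_threat k V E (f(v := Some j)) p q c"
proof -
  have "available k E (f(v := Some j)) p \<subseteq> available k E f p"
    and "c \<in> available k E f q \<Longrightarrow> c \<in> available k E (f(v := Some j)) q"
    using available_update[of f v k E j, OF assms(2)] assms(4) by auto
  then show ?thesis
    using assms(1,3) unfolding block_threat_def legal_move_def by auto
qed

lemma bob_wins_by_move_forcing_threat: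
  assumes "finite V" "\<not> alice_turn V f" "legal_move k V E f w b" "\<exists>v\<in>V. (f(w := Some b)) v = None"
    and "\<And>v j. legal_move k V E (f(w := Some b)) v j \<Longrightarrow>
      \<exists>p q c. block_threat k V E (f(w := Some b, v := Some j)) p q c"
  shows "bob_wins k V E f"
proof -
  let ?f1 = "f(w := Some b)"
  have "alice_turn V ?f1"
    using alice_turn_update[OF assms(1)] assms(2,3) unfolding legal_move_def by simp
  have "bob_wins k V E (?f1(v := Some j))" if move: "legal_move k V E ?f1 v j" for v j
  proof -
    have "\<not> alice_turn V (?f1(v := Some j))"
      using move alice_turn_update[OF assms(1)] \<open>alice_turn V ?f1\<close>
      unfolding legal_move_def by simp
    moreover obtain p q c where "block_threat k V E (?f1(v := Some j)) p q c"
      using assms(5)[OF move] by blast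
    ultimately show ?thesis
      by (rule bob_wins_by_threat)
  qed
  then have "bob_wins k V E ?f1"
    using bob_wins.alice_move[OF \<open>alice_turn V ?f1\<close> assms(4)] by blast
  then show ?thesis
    by (rule bob_wins.bob_move[OF assms(2,3)])
qed

locale P4_in_even_tree =
  fixes V :: "'a set" and E :: "'a set set" and al :: nat and x1 x2 x3 x4 :: 'a
  assumes tree: "is_tree V E" and even_card: "even (card V)" and al_colour: "al < 3"
    and path_distinct: "distinct [x1, x2, x3, x4]" and path_in_V: "{x1, x2, x3, x4} \<subseteq> V"
    and path_edges: "adj E x1 x2" "adj E x2 x3" "adj E x3 x4"
begin

abbreviation path :: "'a set" where
  "path \<equiv> {x1, x2, x3, x4}"

definition surrounded :: "('a \<Rightarrow> nat option) \<Rightarrow> bool" where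
  "surrounded f \<longleftrightarrow> (\<forall>p\<in>path. f p = None \<and> (\<exists>y. adj E p y \<and> f y = Some al) \<and>
     (\<forall>y. adj E p y \<and> f y \<noteq> None \<longrightarrow> f y = Some al))"

lemma finite_V: "finite V"
  using tree unfolding is_tree_def simple_graph_def by blast

lemma path_adj: "adj E x1 x2" "adj E x2 x1" "adj E x2 x3" "adj E x3 x2" "adj E x3 x4" "adj E x4 x3"
  using path_edges adj_sym by metis+

lemma path_nonadj: "\<not> adj E x1 x3" "\<not> adj E x2 x4" "\<not> adj E x1 x4"
proof -
  note no_shortcut = tree_no_common_neighbour_of_path_ends[OF tree]
  show "\<not> adj E x1 x3"
    using no_shortcut[of "[x1, x2]" x3] path_distinct path_adj by (auto simp: adj_sym)
  show "\<not> adj E x2 x4"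
    using no_shortcut[of "[x2, x3]" x4] path_distinct path_adj by (auto simp: adj_sym)
  show "\<not> adj E x1 x4"
    using no_shortcut[of "[x1, x2, x3]" x4] path_distinct path_adj by (auto simp: adj_sym)
qed

lemma off_path_unique_neighbour:
  assumes "v \<notin> path" "p \<in> path" "q \<in> path" "adj E v p" "adj E v q"
  shows "p = q"
proof -
  have no_shortcut: "\<not> (adj E v (hd ys) \<and> adj E v (last ys))"
    if "is_walk E ys" "distinct ys" "length ys \<ge> 2" "set ys \<subseteq> path" for ys
    using tree_no_common_neighbour_of_path_ends[OF tree that(1-3)] that(4) assms(1) by blast
  have "\<not> (adj E v x1 \<and> adj E v x2)" "\<not> (adj E v x2 \<and> adj E v x3)"
    "\<not> (adj E v x3 \<and> adj E v x4)" "\<not> (adj E v x1 \<and> adj E v x3)"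
    "\<not> (adj E v x2 \<and> adj E v x4)" "\<not> (adj E v x1 \<and> adj E v x4)"
    using no_shortcut[of "[x1, x2]"] no_shortcut[of "[x2, x3]"] no_shortcut[of "[x3, x4]"]
      no_shortcut[of "[x1, x2, x3]"] no_shortcut[of "[x2, x3, x4]"]
      no_shortcut[of "[x1, x2, x3, x4]"] path_distinct path_adj
    by auto
  then show ?thesis
    using assms(2-5) by auto
qed

lemma surrounded_uncoloured: "surrounded f \<Longrightarrow> p \<in> path \<Longrightarrow> f p = None"
  unfolding surrounded_def by auto

lemma surrounded_available:
  assumes "surrounded f" "p \<in> path"
  shows "available 3 E f p = {..<3} - {al}"
proof -
  from assms have al_nbr: "\<exists>y. adj E p y \<and> f y = Some al"
    and only_al: "\<forall>y. adj E p y \<and> f y \<noteq> None \<longrightarrow> f y = Some al"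
    unfolding surrounded_def by auto
  have "(\<exists>u. adj E u p \<and> f u = Some i) \<longleftrightarrow> i = al" for i
  proof
    assume "\<exists>u. adj E u p \<and> f u = Some i"
    then show "i = al"
      using only_al adj_sym by (metis option.distinct(1) option.inject)
  qed (use al_nbr adj_sym in metis)
  then show ?thesis
    unfolding available_def by auto
qed

lemma surrounded_update:
  assumes "surrounded f" "f v = None" "v \<notin> path" "j = al \<or> (\<forall>p\<in>path. \<not> adj E v p)"
  shows "surrounded (f(v := Some j))"
  unfolding surrounded_def
proof (intro ballI conjI allI impI)
  fix p assume p: "p \<in> path"
  with assms(3) have "p \<noteq> v" by blast
  with p show "(f(v := Some j)) p = None"
    using assms(1) surrounded_uncoloured by simp
  obtain y where y: "adj E p y" "f y = Some al"
    using assms(1) p unfolding surrounded_def by auto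
  with assms(2) have "y \<noteq> v" by auto
  with y show "\<exists>y. adj E p y \<and> (f(v := Some j)) y = Some al"
    by (intro exI[of _ y]) simp
  fix u assume u: "adj E p u \<and> (f(v := Some j)) u \<noteq> None"
  show "(f(v := Some j)) u = Some al"
  proof (cases "u = v")
    case True
    with u have "adj E v p" by (simp add: adj_sym)
    with p assms(4) have "j = al" by blast
    with True show ?thesis by simp
  next
    case False
    with u have "adj E p u \<and> f u \<noteq> None" by simp
    with p assms(1) have "f u = Some al" unfolding surrounded_def by auto
    with False show ?thesis by simp
  qed
qed

lemma threat_after_colouring_next_to_path:
  assumes sur: "surrounded f" and move: "legal_move 3 V E f v j" and "j \<noteq> al"
    and p: "p \<in> path" and q: "q \<in> path"
    and "adj E v p" "adj E p q" "v \<noteq> q" "\<not> adj E v q"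
  shows "\<exists>c. block_threat 3 V E (f(v := Some j)) p q c"
proof -
  from move have v: "f v = None" and "j < 3"
    unfolding legal_move_def available_def by auto
  then obtain c where c: "c \<noteq> j" "{..<3} - {al} = {c, j}"
    using ex_other_colour[OF al_colour] \<open>j \<noteq> al\<close> by blast
  have "p \<noteq> v"
    using \<open>adj E v p\<close> by auto
  have "available 3 E (f(v := Some j)) p = {c}"
    using available_update[of f v 3 E j p, OF v] surrounded_available[OF sur p]
      \<open>adj E v p\<close> c by auto
  moreover have "c \<in> available 3 E (f(v := Some j)) q"
    using available_update[of f v 3 E j q, OF v] surrounded_available[OF sur q]
      \<open>\<not> adj E v q\<close> c by auto
  moreover have "p \<in> V" "q \<in> V" "f p = None" "f q = None"
    using p q path_in_V surrounded_uncoloured[OF sur] by auto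
  moreover have "adj E q p"
    using \<open>adj E p q\<close> adj_sym by metis
  ultimately have "block_threat 3 V E (f(v := Some j)) p q c"
    unfolding block_threat_def legal_move_def using \<open>p \<noteq> v\<close> \<open>v \<noteq> q\<close> by auto
  then show ?thesis ..
qed

lemma move_keeps_surrounded_or_threatens:
  assumes sur: "surrounded f" and move: "legal_move 3 V E f v j"
  shows "surrounded (f(v := Some j)) \<or> (\<exists>p q c. block_threat 3 V E (f(v := Some j)) p q c)"
proof (cases "v \<in> path")
  case True
  with move have "j \<noteq> al"
    using surrounded_available[OF sur True] unfolding legal_move_def by auto
  note threat = threat_after_colouring_next_to_path[OF sur move this]
  from True consider "v = x1" | "v = x2" | "v = x3" | "v = x4" by auto
  then show ?thesis
  proof cases
    case 1
    then show ?thesis using threat[of x2 x3] path_adj path_nonadj path_distinct by auto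
  next
    case 2
    then show ?thesis using threat[of x3 x4] path_adj path_nonadj path_distinct by auto
  next
    case 3
    then show ?thesis using threat[of x2 x1] path_adj path_nonadj path_distinct by (auto simp: adj_sym)
  next
    case 4
    then show ?thesis using threat[of x3 x2] path_adj path_nonadj path_distinct by (auto simp: adj_sym)
  qed
next
  case off_path: False
  from move have "f v = None"
    unfolding legal_move_def by auto
  show ?thesis
  proof (cases "j = al \<or> (\<forall>p\<in>path. \<not> adj E v p)")
    case True
    then show ?thesis
      using surrounded_update[OF sur \<open>f v = None\<close> off_path] by blast
  next
    case False
    then obtain p where p: "p \<in> path" "adj E v p" and "j \<noteq> al"
      by blast
    obtain q where q: "q \<in> path" "adj E p q"
      using p(1) path_adj by auto
    have "\<not> adj E v q" "v \<noteq> q"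
      using off_path_unique_neighbour[OF off_path p(1) q(1) p(2)] q off_path by auto
    then show ?thesis
      using threat_after_colouring_next_to_path[OF sur move \<open>j \<noteq> al\<close> p(1) q(1) p(2) q(2)]
      by blast
  qed
qed

lemma uncoloured_off_path_on_bobs_turn:
  assumes sur: "surrounded f" and turn: "\<not> alice_turn V f"
  shows "\<exists>x\<in>V. f x = None \<and> x \<notin> path"
proof (rule ccontr)
  assume "\<not> ?thesis"
  then have "{w\<in>V. f w \<noteq> None} = V - path"
    using surrounded_uncoloured[OF sur] path_in_V by auto
  moreover have "card path = 4"
    using path_distinct by auto
  moreover have "card path \<le> card V"
    using card_mono[OF finite_V path_in_V] .
  ultimately have "card {w\<in>V. f w \<noteq> None} = card V - 4" "card V \<ge> 4"
    using card_Diff_subset[OF _ path_in_V] finite_subset[OF path_in_V finite_V] by auto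
  then have "even (card {w\<in>V. f w \<noteq> None})"
    using even_card by auto
  with turn show False
    unfolding alice_turn_def by simp
qed


text \<open>Bob colours \<open>x\<^sub>2\<close> with \<open>b\<close>; then \<open>x\<^sub>1\<close> is threatened via \<open>x\<close> and \<open>x\<^sub>3\<close> via \<open>x\<^sub>4\<close>, both with
  \<open>c\<close>, and as \<open>x\<close> and \<open>x\<^sub>4\<close> have no common neighbour, one move of Alice cannot parry both.\<close>

context
  fixes f :: "'a \<Rightarrow> nat option" and x :: 'a and b c :: nat
  assumes sur: "surrounded f" and x: "x \<in> V" "f x = None" "x \<notin> path" "adj E x x1"
    and c: "c \<in> available 3 E f x" and colours: "b \<noteq> c" "{..<3} - {al} = {b, c}"
begin

lemma end_neighbour_nonadj: "\<not> adj E x2 x" "\<not> adj E x3 x" "\<not> adj E x4 x"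
proof -
  have "\<not> adj E x x2" "\<not> adj E x x3" "\<not> adj E x x4"
    using off_path_unique_neighbour[OF x(3), of x1] x(4) path_distinct by auto
  then show "\<not> adj E x2 x" "\<not> adj E x3 x" "\<not> adj E x4 x"
    using adj_sym by metis+
qed

lemma end_neighbour_threats:
  "block_threat 3 V E (f(x2 := Some b)) x1 x c" "block_threat 3 V E (f(x2 := Some b)) x3 x4 c"
proof -
  let ?f1 = "f(x2 := Some b)"
  have avail: "available 3 E ?f1 u =
      (if adj E x2 u then available 3 E f u - {b} else available 3 E f u)" for u
    using available_update[of f x2 3 E b u] surrounded_uncoloured[OF sur] by simp
  have "available 3 E ?f1 x1 = {c}" "available 3 E ?f1 x3 = {c}"
    using avail surrounded_available[OF sur] path_adj colours by auto
  moreover have "c \<in> available 3 E ?f1 x" "c \<in> available 3 E ?f1 x4"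
    using avail surrounded_available[OF sur] end_neighbour_nonadj path_nonadj(2) c colours
    by auto
  moreover have "?f1 x1 = None" "?f1 x3 = None" "?f1 x4 = None" "?f1 x = None"
    using surrounded_uncoloured[OF sur] path_distinct x by auto
  ultimately show "block_threat 3 V E ?f1 x1 x c" "block_threat 3 V E ?f1 x3 x4 c"
    unfolding block_threat_def legal_move_def using x path_in_V path_adj adj_sym by auto
qed

lemma end_neighbour_reply_threatens:
  assumes "legal_move 3 V E (f(x2 := Some b)) v j"
  shows "\<exists>p q c. block_threat 3 V E (f(x2 := Some b, v := Some j)) p q c"
proof -
  from assms have v: "(f(x2 := Some b)) v = None" "v \<noteq> x2"
    unfolding legal_move_def by auto
  show ?thesis
  proof (cases "v \<in> {x1, x} \<or> (adj E v x \<and> j = c)")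
    case True
    have "v \<notin> {x3, x4}"
      using True x(3) end_neighbour_nonadj path_distinct by auto
    moreover have "\<not> adj E v x4"
    proof
      assume "adj E v x4"
      moreover have "v \<noteq> x1" "v \<noteq> x"
        using \<open>adj E v x4\<close> path_nonadj end_neighbour_nonadj by (auto simp: adj_sym)
      ultimately show False
        using tree_no_common_neighbour_of_path_ends[OF tree, of "[x, x1, x2, x3, x4]" v]
          True x path_adj path_distinct \<open>v \<notin> {x3, x4}\<close> v(2) by auto
    qed
    ultimately show ?thesis
      using block_threat_update[OF end_neighbour_threats(2) v(1)] by blast
  next
    case False
    then show ?thesis
      using block_threat_update[OF end_neighbour_threats(1) v(1)] by blast
  qed
qed

end

text \<open>Bob colours \<open>x\<^sub>1\<close> with \<open>b\<close>; then \<open>x\<^sub>2\<close> is threatened both via \<open>x\<close> and via \<open>x\<^sub>3\<close>. Alice can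
  parry both only by colouring \<open>x\<^sub>2\<close> itself, necessarily with \<open>c\<close>, and then \<open>x\<^sub>3\<close> is threatened
  via \<open>x\<^sub>4\<close> with \<open>b\<close>.\<close>

context
  fixes f :: "'a \<Rightarrow> nat option" and x :: 'a and b c :: nat
  assumes sur: "surrounded f" and x: "x \<in> V" "f x = None" "x \<notin> path" "adj E x x2"
    and c: "c \<in> available 3 E f x" and colours: "b \<noteq> c" "{..<3} - {al} = {b, c}"
begin

lemma inner_neighbour_nonadj: "\<not> adj E x1 x" "\<not> adj E x3 x" "\<not> adj E x4 x"
proof -
  have "\<not> adj E x x1" "\<not> adj E x x3" "\<not> adj E x x4"
    using off_path_unique_neighbour[OF x(3), of x2] x(4) path_distinct by auto
  then show "\<not> adj E x1 x" "\<not> adj E x3 x" "\<not> adj E x4 x"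
    using adj_sym by metis+
qed

lemma inner_neighbour_available:
  "available 3 E (f(x1 := Some b)) u =
    (if adj E x1 u then available 3 E f u - {b} else available 3 E f u)"
  using available_update[of f x1 3 E b u] surrounded_uncoloured[OF sur] by simp

lemma inner_neighbour_threats:
  "block_threat 3 V E (f(x1 := Some b)) x2 x c" "block_threat 3 V E (f(x1 := Some b)) x2 x3 c"
proof -
  let ?f1 = "f(x1 := Some b)"
  have "available 3 E ?f1 x2 = {c}"
    using inner_neighbour_available surrounded_available[OF sur] path_adj colours by auto
  moreover have "c \<in> available 3 E ?f1 x" "c \<in> available 3 E ?f1 x3"
    using inner_neighbour_available surrounded_available[OF sur] inner_neighbour_nonadj
      path_nonadj(1) c colours
    by auto
  moreover have "?f1 x2 = None" "?f1 x3 = None" "?f1 x = None"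
    using surrounded_uncoloured[OF sur] path_distinct x by auto
  ultimately show "block_threat 3 V E ?f1 x2 x c" "block_threat 3 V E ?f1 x2 x3 c"
    unfolding block_threat_def legal_move_def using x path_in_V path_adj adj_sym by auto
qed

lemma inner_neighbour_reply_threatens:
  assumes reply: "legal_move 3 V E (f(x1 := Some b)) v j"
  shows "\<exists>p q c. block_threat 3 V E (f(x1 := Some b, v := Some j)) p q c"
proof -
  let ?f1 = "f(x1 := Some b)"
  from reply have v: "?f1 v = None" "v \<noteq> x1"
    unfolding legal_move_def by auto
  show ?thesis
  proof (cases "v = x2")
    case True
    then have "j = c"
      using reply inner_neighbour_threats(1) unfolding legal_move_def block_threat_def by auto
    then have "available 3 E (?f1(x2 := Some j)) u =
        (if adj E x2 u then available 3 E ?f1 u - {c} else available 3 E ?f1 u)" for u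
      using available_update[of ?f1 x2 3 E j u] v True by simp
    then have "block_threat 3 V E (?f1(x2 := Some j)) x3 x4 b"
      unfolding block_threat_def legal_move_def
      using inner_neighbour_available[of x3] inner_neighbour_available[of x4]
        surrounded_available[OF sur] surrounded_uncoloured[OF sur]
        path_adj path_nonadj colours path_in_V path_distinct
      by (auto simp: adj_sym)
    with True show ?thesis
      by blast
  next
    case v_x2: False
    show ?thesis
    proof (cases "v = x \<or> (adj E v x \<and> j = c)")
      case True
      have "v \<noteq> x3"
        using True x(3) inner_neighbour_nonadj by (auto simp: adj_sym)
      moreover have "\<not> adj E v x3"
      proof
        assume "adj E v x3"
        moreover have "v \<noteq> x"
          using \<open>adj E v x3\<close> inner_neighbour_nonadj by (auto simp: adj_sym)
        ultimately show False
          using tree_no_common_neighbour_of_path_ends[OF tree, of "[x, x2, x3]" v]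
            True x path_adj path_distinct \<open>v \<noteq> x3\<close> v_x2 by auto
      qed
      ultimately show ?thesis
        using block_threat_update[OF inner_neighbour_threats(2) v(1)] v_x2 by blast
    next
      case False
      then show ?thesis
        using block_threat_update[OF inner_neighbour_threats(1) v(1)] v_x2 by blast
    qed
  qed
qed

end

lemma bob_wins_next_to_end:
  assumes turn: "\<not> alice_turn V f" and sur: "surrounded f"
    and x: "x \<in> V" "f x = None" "x \<notin> path" "adj E x x1"
    and c: "c \<in> available 3 E f x" "c \<noteq> al"
  shows "bob_wins 3 V E f"
proof -
  have "c < 3"
    using c unfolding available_def by auto
  then obtain b where colours: "b \<noteq> c" "{..<3} - {al} = {b, c}"
    using ex_other_colour[OF al_colour] c(2) by blast
  have "legal_move 3 V E f x2 b"
    unfolding legal_move_def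
    using path_in_V surrounded_uncoloured[OF sur] surrounded_available[OF sur] colours by auto
  moreover have "\<exists>v\<in>V. (f(x2 := Some b)) v = None"
    using end_neighbour_threats[OF sur x c(1) colours] unfolding block_threat_def by blast
  ultimately show ?thesis
    using bob_wins_by_move_forcing_threat[OF finite_V turn]
      end_neighbour_reply_threatens[OF sur x c(1) colours] by blast
qed

lemma bob_wins_next_to_inner:
  assumes turn: "\<not> alice_turn V f" and sur: "surrounded f"
    and x: "x \<in> V" "f x = None" "x \<notin> path" "adj E x x2"
    and c: "c \<in> available 3 E f x" "c \<noteq> al"
  shows "bob_wins 3 V E f"
proof -
  have "c < 3"
    using c unfolding available_def by auto
  then obtain b where colours: "b \<noteq> c" "{..<3} - {al} = {b, c}"
    using ex_other_colour[OF al_colour] c(2) by blast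
  have "legal_move 3 V E f x1 b"
    unfolding legal_move_def
    using path_in_V surrounded_uncoloured[OF sur] surrounded_available[OF sur] colours by auto
  moreover have "\<exists>v\<in>V. (f(x1 := Some b)) v = None"
    using inner_neighbour_threats[OF sur x c(1) colours] unfolding block_threat_def by blast
  ultimately show ?thesis
    using bob_wins_by_move_forcing_threat[OF finite_V turn]
      inner_neighbour_reply_threatens[OF sur x c(1) colours] by blast
qed

lemma bob_wins_next_to_path:
  assumes "\<not> alice_turn V f" "surrounded f" "x \<in> V" "f x = None" "x \<notin> path"
    and "p \<in> path" "adj E x p" "c \<in> available 3 E f x" "c \<noteq> al"
  shows "bob_wins 3 V E f"
proof -
  interpret reversed: P4_in_even_tree V E al x4 x3 x2 x1
    using tree even_card al_colour path_distinct path_in_V path_adj by unfold_locales auto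
  have "reversed.surrounded f"
    using assms(2) unfolding surrounded_def reversed.surrounded_def by auto
  have "x \<notin> {x4, x3, x2, x1}"
    using assms(5) by auto
  note reversed_assms = assms(1) \<open>reversed.surrounded f\<close> assms(3,4)
    \<open>x \<notin> {x4, x3, x2, x1}\<close> assms(7-9)
  from assms(6) consider "p = x1" | "p = x2" | "p = x3" | "p = x4"
    by auto
  then show ?thesis
  proof cases
    case 1
    then show ?thesis using bob_wins_next_to_end assms by blast
  next
    case 2
    then show ?thesis using bob_wins_next_to_inner assms by blast
  next
    case 3
    then show ?thesis using reversed.bob_wins_next_to_inner reversed_assms by blast
  next
    case 4
    then show ?thesis using reversed.bob_wins_next_to_end reversed_assms by blast
  qed
qed

lemma bob_wins_if_no_move_keeps_surrounded:
  assumes bob: "\<not> alice_turn V f" and sur: "surrounded f" and "\<not> blocked 3 V E f"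
    and stuck: "\<And>v j. legal_move 3 V E f v j \<Longrightarrow> \<not> surrounded (f(v := Some j))"
  shows "bob_wins 3 V E f"
proof -
  obtain x where x: "x \<in> V" "f x = None" "x \<notin> path"
    using uncoloured_off_path_on_bobs_turn[OF sur bob] by blast
  have legal_at_x: "legal_move 3 V E f x j" if "j \<in> available 3 E f x" for j
    using x that unfolding legal_move_def by blast
  have "available 3 E f x \<noteq> {}"
    using assms(3) x unfolding blocked_def by blast
  then obtain c where c: "c \<in> available 3 E f x"
    by blast
  have "c \<noteq> al" and "\<exists>p\<in>path. adj E x p"
    using stuck[OF legal_at_x[OF c]] surrounded_update[OF sur x(2,3)] by blast+
  then show ?thesis
    using bob_wins_next_to_path[OF bob sur x _ _ c] by blast
qed

lemma bob_wins_if_surrounded: "surrounded f \<Longrightarrow> bob_wins 3 V E f"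
proof (induction "card {v\<in>V. f v = None}" arbitrary: f rule: less_induct)
  case (less f)
  note sur = less.prems
  have IH: "bob_wins 3 V E (f(v := Some j))"
    if "legal_move 3 V E f v j" "surrounded (f(v := Some j))" for v j
  proof (rule less.hyps[OF _ that(2)])
    from that(1) have "v \<in> V" "f v = None"
      unfolding legal_move_def by auto
    then have "{w\<in>V. (f(v := Some j)) w = None} \<subset> {w\<in>V. f w = None}"
      by auto
    then show "card {w\<in>V. (f(v := Some j)) w = None} < card {w\<in>V. f w = None}"
      using finite_V by (simp add: psubset_card_mono)
  qed
  show ?case
  proof (cases "alice_turn V f")
    case alice: True
    have "bob_wins 3 V E (f(v := Some j))" if move: "legal_move 3 V E f v j" for v j
    proof -
      have bob: "\<not> alice_turn V (f(v := Some j))"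
        using move alice_turn_update[OF finite_V] alice unfolding legal_move_def by simp
      from move_keeps_surrounded_or_threatens[OF sur move] show ?thesis
      proof (elim disjE exE)
        assume "surrounded (f(v := Some j))"
        then show ?thesis by (rule IH[OF move])
      next
        fix p q c assume "block_threat 3 V E (f(v := Some j)) p q c"
        with bob show ?thesis by (rule bob_wins_by_threat)
      qed
    qed
    moreover have "\<exists>v\<in>V. f v = None"
      using surrounded_uncoloured[OF sur] path_in_V by auto
    ultimately show ?thesis
      using bob_wins.alice_move[OF alice] by blast
  next
    case bob: False
    show ?thesis
    proof (cases "blocked 3 V E f \<or> (\<exists>v j. legal_move 3 V E f v j \<and> surrounded (f(v := Some j)))")
      case True
      then show ?thesis
      proof (elim disjE exE conjE)
        assume "blocked 3 V E f"
        then show ?thesis by (rule bob_wins.won)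
      next
        fix v j assume move: "legal_move 3 V E f v j" and "surrounded (f(v := Some j))"
        then have "bob_wins 3 V E (f(v := Some j))"
          by (rule IH)
        then show ?thesis
          by (rule bob_wins.bob_move[OF bob move])
      qed
    next
      case False
      then show ?thesis
        using bob_wins_if_no_move_keeps_surrounded[OF bob sur] by blast
    qed
  qed
qed

end

theorem lemma8p2:
  fixes V :: "'a set" and E :: "'a set set" and c :: "'a \<Rightarrow> nat option"
  assumes "is_tree V E"
    and "even (card V)"
    and "reachable 3 V E c"
    and "al < 3"
    and "surrounded_P4 V E c al P"
  shows "bob_wins 3 V E c"
proof -
  from assms(5) obtain x1 x2 x3 x4 where P: "P = [x1, x2, x3, x4]"
    unfolding surrounded_P4_def by (auto simp: length_Suc_conv numeral_eq_Suc)
  interpret P4_in_even_tree V E al x1 x2 x3 x4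
    using assms(1,2,4,5) unfolding P surrounded_P4_def by unfold_locales auto
  have "surrounded c"
    using assms(5) unfolding P surrounded_P4_def surrounded_def by auto
  then show ?thesis
    by (rule bob_wins_if_surrounded)
qed

end
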